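(* Let $\Gamma$ be a connected signed graph with $n$ vertices and $m$ edges, and let $\mu_1\ge\mu_2\ge\cdots\ge\mu_n\ge 0$ be the eigenvalues of its Laplacian matrix $L(\Gamma)$ (with multiplicity). Let $p$ be a positive integer. Then the spectrum of the adjacency matrix of $S_p(\Gamma)$, as a multiset, is: if $\Gamma$ is balanced (in which case $\mu_n=0$): $0$ with multiplicity $pm-n+2$, together with $\pm\sqrt{p\mu_i}$ for $i=1,\dots,n-1$; if $\Gamma$ is unbalanced: $0$ with multiplicity $pm-n$, together with $\pm\sqrt{p\mu_i}$ for $i=1,\dots,n$.
   Context: A signed graph $\Gamma=(G,\sigma)$ is a simple graph $G$ with a sign function $\sigma:E(G)\to\{1,-1\}$; its adjacency matrix $A(\Gamma)$ has $(i,j)$ entry $\sigma(v_iv_j)$ if $v_iv_j\in E(G)$ and $0$ otherwise, and its Laplacian matrix is $L(\Gamma)=D(G)-A(\Gamma)$ with $D(G)$ the diagonal degree matrix. $\Gamma$ is balanced if every cycle has an even number of negative edges, unbalanced otherwise. The spectrum of a signed graph means the spectrum of its adjacency matrix. Orientation: for $\Gamma$ with vertices $v_1,\dots,v_n$ and edges $e_1,\dots,e_m$, fix a function $\vartheta$ assigning to each pair $(v,e)$ with $v$ an end of $e$ a value $\vartheta(v,e)\in\{1,-1\}$, such that for every edge $e=vw$, $\vartheta(v,e)\vartheta(w,e)=-\sigma(e)$. The signed graph $S_p(\Gamma)$ ($p$ a positive integer): its vertex set is $V(G)\cup\{e_j^{(t)}:1\le j\le m,\ 1\le t\le p\}$;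 its edges are exactly the pairs $v\,e_j^{(t)}$ with $v$ an end of $e_j$ in $G$, with sign $\vartheta(v,e_j)$ (the edges of $G$ are not kept). It has $n+pm$ vertices and $2pm$ edges; $S_1(\Gamma)=S(\Gamma)$ is the signed subdivision graph. *)

theory Defs
  imports "Jordan_Normal_Form.Char_Poly" "HOL-Library.Multiset"
begin

text \<open>A signed graph on vertex set {0..<n}: edges e_0,...,e_{m-1} are given by the list E of
  endpoint pairs, and sigma j in {1,-1} is the sign of edge e_j.\<close>

definition ends :: "(nat \<times> nat) list \<Rightarrow> nat \<Rightarrow> nat set" where
  "ends E j = {fst (E ! j), snd (E ! j)}"

definition signed_graph :: "nat \<Rightarrow> (nat \<times> nat) list \<Rightarrow> (nat \<Rightarrow> int) \<Rightarrow> bool" where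
  "signed_graph n E \<sigma> \<longleftrightarrow>
     (\<forall>j < length E. fst (E ! j) < n \<and> snd (E ! j) < n \<and> fst (E ! j) \<noteq> snd (E ! j)
        \<and> (\<sigma> j = 1 \<or> \<sigma> j = -1))
     \<and> distinct (map (ends E) [0..<length E])"

definition adj :: "(nat \<times> nat) list \<Rightarrow> nat \<Rightarrow> nat \<Rightarrow> bool" where
  "adj E u v \<longleftrightarrow> (\<exists>j < length E. ends E j = {u, v})"

definition connected_graph :: "nat \<Rightarrow> (nat \<times> nat) list \<Rightarrow> bool" where
  "connected_graph n E \<longleftrightarrow> n \<ge> 1 \<and> (\<forall>u < n. \<forall>v < n. (adj E)\<^sup>*\<^sup>* u v)"

definition is_cycle :: "(nat \<times> nat) list \<Rightarrow> nat list \<Rightarrow> nat list \<Rightarrow> bool" where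
  "is_cycle E vs es \<longleftrightarrow> length vs \<ge> 3 \<and> length es = length vs \<and> distinct vs \<and> distinct es
     \<and> (\<forall>i < length vs. es ! i < length E
           \<and> ends E (es ! i) = {vs ! i, vs ! ((i + 1) mod length vs)})"

definition balanced :: "(nat \<times> nat) list \<Rightarrow> (nat \<Rightarrow> int) \<Rightarrow> bool" where
  "balanced E \<sigma> \<longleftrightarrow>
     (\<forall>vs es. is_cycle E vs es \<longrightarrow> even (length (filter (\<lambda>j. \<sigma> j = -1) es)))"

definition adjacency :: "nat \<Rightarrow> (nat \<times> nat) list \<Rightarrow> (nat \<Rightarrow> int) \<Rightarrow> real mat" where
  "adjacency n E \<sigma> = mat n n (\<lambda>(u, v).
     if \<exists>j < length E. ends E j = {u, v} \<and> u \<noteq> v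
     then of_int (\<sigma> (THE j. j < length E \<and> ends E j = {u, v})) else 0)"

definition degree :: "(nat \<times> nat) list \<Rightarrow> nat \<Rightarrow> nat" where
  "degree E v = card {j. j < length E \<and> v \<in> ends E j}"

definition laplacian :: "nat \<Rightarrow> (nat \<times> nat) list \<Rightarrow> (nat \<Rightarrow> int) \<Rightarrow> real mat" where
  "laplacian n E \<sigma> = mat n n (\<lambda>(u, v). if u = v then real (degree E u) else 0) - adjacency n E \<sigma>"

definition orientation :: "(nat \<times> nat) list \<Rightarrow> (nat \<Rightarrow> int) \<Rightarrow> (nat \<Rightarrow> nat \<Rightarrow> int) \<Rightarrow> bool" where
  "orientation E \<sigma> \<theta> \<longleftrightarrow>
     (\<forall>j < length E. (\<theta> (fst (E ! j)) j = 1 \<or> \<theta> (fst (E ! j)) j = -1)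
        \<and> (\<theta> (snd (E ! j)) j = 1 \<or> \<theta> (snd (E ! j)) j = -1)
        \<and> \<theta> (fst (E ! j)) j * \<theta> (snd (E ! j)) j = - \<sigma> j)"

text \<open>Adjacency matrix of S_p(Gamma): vertices 0..<n are the original vertices; vertex
  n + j*p + t (j < m, t < p) is e_j^(t+1).\<close>
definition Sp_entry :: "nat \<Rightarrow> nat \<Rightarrow> (nat \<times> nat) list \<Rightarrow> (nat \<Rightarrow> nat \<Rightarrow> int) \<Rightarrow> nat \<Rightarrow> nat \<Rightarrow> int" where
  "Sp_entry n p E \<theta> v x =
     (if v < n \<and> n \<le> x \<and> v \<in> ends E ((x - n) div p) then \<theta> v ((x - n) div p) else 0)"

definition Sp_adjacency :: "nat \<Rightarrow> nat \<Rightarrow> (nat \<times> nat) list \<Rightarrow> (nat \<Rightarrow> nat \<Rightarrow> int) \<Rightarrow> real mat" where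
  "Sp_adjacency n p E \<theta> = mat (n + p * length E) (n + p * length E) (\<lambda>(a, b).
     of_int (Sp_entry n p E \<theta> a b + Sp_entry n p E \<theta> b a))"

definition has_spectrum :: "real mat \<Rightarrow> real multiset \<Rightarrow> bool" where
  "has_spectrum A S \<longleftrightarrow> char_poly A = prod_mset (image_mset (\<lambda>a. [:-a, 1:]) S)"

definition pm_sqrt :: "nat \<Rightarrow> real multiset \<Rightarrow> real multiset" where
  "pm_sqrt p M = sum_mset (image_mset (\<lambda>\<mu>. {# sqrt (real p * \<mu>), - sqrt (real p * \<mu>) #}) M)"

end

theory Submission
  imports Defs
begin

text \<open>
  Number the subdivision vertices after the original ones. Then A(S_p(\<Gamma>)) = [[0, N], [N^T, 0]],
  where N is the signed incidence matrix B of \<Gamma> with every column repeated p times, so that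
  N N^T = p B B^T = p L(\<Gamma>). Clearing the lower left block of x I - A(S_p(\<Gamma>)) gives
  \<chi>(x) x^n = det (x^2 I - p L) x^(pm), and det (x^2 I - p L) = \<Prod>_i (x^2 - p \<mu>_i)
  = \<Prod>_i (x - \<surd>(p \<mu>_i)) (x + \<surd>(p \<mu>_i)); the roots are real because L = B B^T is
  positive semidefinite.

  It remains to count zeros. L x = 0 iff B^T x = 0, i.e. iff x_w = \<sigma>(e) x_v along every edge
  e = vw. In a connected graph a nonzero such x exists iff all walks between two vertices have
  the same sign, i.e. iff \<Gamma> is balanced. Then 0 is a Laplacian eigenvalue and n \<le> m + 1, which
  leaves pm - n + 2 zeros; otherwise the product does not vanish at 0, which forces n \<le> pm and
  leaves pm - n zeros.
\<close>

section \<open>Polynomials with prescribed roots\<close>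

definition linear_factors :: "real multiset \<Rightarrow> real poly" where
  "linear_factors M = prod_mset (image_mset (\<lambda>a. [:-a, 1:]) M)"

lemma has_spectrum_iff_linear_factors: "has_spectrum A M \<longleftrightarrow> char_poly A = linear_factors M"
  unfolding has_spectrum_def linear_factors_def ..

lemma poly_linear_factors_eq_0_iff: "poly (linear_factors M) a = 0 \<longleftrightarrow> a \<in># M"
  by (auto simp: linear_factors_def poly_prod_mset prod_mset_zero_iff)

lemma linear_factors_add_mset: "linear_factors (add_mset a M) = [:-a, 1:] * linear_factors M"
  by (simp add: linear_factors_def)

lemma degree_linear_factors: "Polynomial.degree (linear_factors M) = size M"
proof (induction M)
  case (add a M)
  have "linear_factors M \<noteq> 0"
    by (auto simp: linear_factors_def prod_mset_zero_iff)
  then have "Polynomial.degree ([:-a, 1:] * linear_factors M) = Suc (size M)"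
    using add.IH by (subst degree_mult_eq) auto
  then show ?case
    by (simp only: linear_factors_add_mset size_add_mset)
qed (simp add: linear_factors_def)

lemma linear_factors_replicate_zero:
  "linear_factors (replicate_mset r 0 + M) = [:0, 1:] ^ r * linear_factors M"
  by (simp add: linear_factors_def image_replicate_mset prod_mset_replicate_mset)

lemma linear_factors_pm_sqrt:
  assumes "\<forall>a\<in>#M. a \<ge> 0"
  shows "linear_factors (pm_sqrt p M) = prod_mset (image_mset (\<lambda>a. [:-(real p * a), 0, 1:]) M)"
  using assms
proof (induction M)
  case (add a M)
  let ?s = "sqrt (real p * a)"
  have "pm_sqrt p (add_mset a M) = add_mset ?s (add_mset (- ?s) (pm_sqrt p M))"
    by (simp add: pm_sqrt_def)
  then have "linear_factors (pm_sqrt p (add_mset a M)) =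
      ([:- ?s, 1:] * [:?s, 1:]) * linear_factors (pm_sqrt p M)"
    by (simp only: linear_factors_add_mset mult.assoc minus_minus)
  also have "[:- ?s, 1:] * [:?s, 1:] = [:-(real p * a), 0, 1:]"
    using add.prems by simp
  finally show ?case
    using add by simp
qed (simp add: linear_factors_def pm_sqrt_def)

lemma pm_sqrt_add_zero: "pm_sqrt p (add_mset 0 M) = replicate_mset 2 0 + pm_sqrt p M"
  by (simp add: pm_sqrt_def numeral_2_eq_2)

lemma zero_in_pm_sqrt_iff: "p > 0 \<Longrightarrow> 0 \<in># pm_sqrt p M \<longleftrightarrow> 0 \<in># M"
  by (induction M) (auto simp: pm_sqrt_def)

lemma mult_power_X_cancel:
  fixes q r :: "'a :: idom poly"
  assumes "q * [:0, 1:] ^ a = r * [:0, 1:] ^ b" and "a \<le> b"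
  shows "q = [:0, 1:] ^ (b - a) * r"
proof -
  have "q * [:0, 1:] ^ a = ([:0, 1:] ^ (b - a) * r) * [:0, 1:] ^ a"
    using assms by (simp add: algebra_simps flip: power_add)
  then show ?thesis by simp
qed

lemma mult_power_X_exponent_le:
  fixes q r :: "'a :: idom poly"
  assumes "q * [:0, 1:] ^ a = r * [:0, 1:] ^ b" and "poly r 0 \<noteq> 0"
  shows "a \<le> b"
proof (rule ccontr)
  assume "\<not> a \<le> b"
  then have "r * [:0, 1:] ^ b = (q * [:0, 1:] ^ (a - b)) * [:0, 1:] ^ b"
    using assms(1) by (simp add: mult.assoc flip: power_add)
  then have "r = q * [:0, 1:] ^ (a - b)" by simp
  then show False using assms(2) \<open>\<not> a \<le> b\<close> by simp
qed

lemma has_spectrum_replicate_zero: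
  assumes "char_poly A * [:0, 1:] ^ a = linear_factors M * [:0, 1:] ^ b" and "a \<le> b"
  shows "has_spectrum A (replicate_mset (b - a) 0 + M)"
  using mult_power_X_cancel[OF assms]
  by (simp only: has_spectrum_iff_linear_factors linear_factors_replicate_zero)

section \<open>Bipartite block matrices and Gram matrices\<close>

lemma det_square_char_matrix_smult:
  fixes A :: "real mat"
  assumes A: "A \<in> carrier_mat n n" and char: "char_poly A = linear_factors M" and "c \<noteq> 0"
  shows "det ([:0, 0, 1:] \<cdot>\<^sub>m 1\<^sub>m n - map_mat (\<lambda>a. [:a:]) (c \<cdot>\<^sub>m A))
       = prod_mset (image_mset (\<lambda>a. [:-(c * a), 0, 1:]) M)"
proof -
  \<comment> \<open>substitute \<open>x\<^sup>2 / c\<close> for \<open>x\<close> in the characteristic polynomial of \<open>A\<close>\<close>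
  define h where "h f = pcompose f [:0, 0, 1 / c:]" for f :: "real poly"
  interpret h: comm_ring_hom h
    by unfold_locales (simp_all add: h_def pcompose_add pcompose_mult pcompose_1)
  have h_linear: "[:c:] * h [:-a, 1:] = [:-(c * a), 0, 1:]" for a
    using \<open>c \<noteq> 0\<close> by (simp add: h_def pcompose_pCons)
  have size_M: "size M = n"
    using degree_monic_char_poly[OF A] char degree_linear_factors by metis
  have "[:0, 0, 1:] \<cdot>\<^sub>m 1\<^sub>m n - map_mat (\<lambda>a. [:a:]) (c \<cdot>\<^sub>m A) =
      [:c:] \<cdot>\<^sub>m map_mat h (char_poly_matrix A)"
    by (rule eq_matI) (use A \<open>c \<noteq> 0\<close> in \<open>auto simp: char_poly_matrix_def h_def pcompose_pCons\<close>)
  then have "det ([:0, 0, 1:] \<cdot>\<^sub>m 1\<^sub>m n - map_mat (\<lambda>a. [:a:]) (c \<cdot>\<^sub>m A)) =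
      [:c:] ^ n * h (char_poly A)"
    using A by (simp add: char_poly_def carrier_matD[OF char_poly_matrix_closed[OF A]])
  also have "h (char_poly A) = prod_mset (image_mset (\<lambda>a. h [:-a, 1:]) M)"
    unfolding char linear_factors_def by (simp add: h.hom_prod_mset image_mset.compositionality comp_def)
  also have "[:c:] ^ n * \<dots> = prod_mset (image_mset (\<lambda>a. [:c:] * h [:-a, 1:]) M)"
    unfolding size_M[symmetric] by (induction M) (auto simp: algebra_simps)
  finally show ?thesis
    by (simp only: h_linear)
qed

lemma char_poly_bipartite:
  fixes N :: "real mat"
  assumes N: "N \<in> carrier_mat n k"
  shows "char_poly (four_block_mat (0\<^sub>m n n) N (transpose_mat N) (0\<^sub>m k k)) * [:0, 1:] ^ n
       = det ([:0, 0, 1:] \<cdot>\<^sub>m 1\<^sub>m n - map_mat (\<lambda>a. [:a:]) (N * transpose_mat N)) * [:0, 1:] ^ k"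
proof -
  let ?X = "[:0, 1:] :: real poly"
  define Nh where "Nh = map_mat (\<lambda>a. [:a:]) N"
  have Nh: "Nh \<in> carrier_mat n k" "transpose_mat Nh \<in> carrier_mat k n"
    using N by (simp_all add: Nh_def)
  define S where "S = four_block_mat (0\<^sub>m n n) N (transpose_mat N) (0\<^sub>m k k)"
  have S: "S \<in> carrier_mat (n + k) (n + k)"
    using N by (simp add: S_def)
  \<comment> \<open>column operations clearing the lower left block of \<open>x I - S\<close>\<close>
  define R where "R = four_block_mat (?X \<cdot>\<^sub>m 1\<^sub>m n) (0\<^sub>m n k) (transpose_mat Nh) (1\<^sub>m k)"
  have R: "R \<in> carrier_mat (n + k) (n + k)"
    using Nh by (simp add: R_def)
  have char_matrix: "char_poly_matrix S =
      four_block_mat (?X \<cdot>\<^sub>m 1\<^sub>m n) (- Nh) (- transpose_mat Nh) (?X \<cdot>\<^sub>m 1\<^sub>m k)"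
    by (rule eq_matI) (use N in \<open>auto simp: char_poly_matrix_def S_def Nh_def\<close>)
  have triangular: "char_poly_matrix S * R = four_block_mat
      ([:0, 0, 1:] \<cdot>\<^sub>m 1\<^sub>m n - Nh * transpose_mat Nh) (- Nh) (0\<^sub>m k n) (?X \<cdot>\<^sub>m 1\<^sub>m k)"
    unfolding R_def char_matrix
    by (subst mult_four_block_mat[of _ n n _ k _ k _ _ n _ k], use Nh in simp_all)
      (intro conjI eq_matI; use Nh in auto)
  have "char_poly S * ?X ^ n = det (char_poly_matrix S * R)"
    using det_mult[OF char_poly_matrix_closed[OF S] R] Nh
    by (simp add: char_poly_def R_def det_four_block_mat_upper_right_zero[of _ n _ k])
  also have "\<dots> = det ([:0, 0, 1:] \<cdot>\<^sub>m 1\<^sub>m n - Nh * transpose_mat Nh) * ?X ^ k"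
    unfolding triangular using Nh by (subst det_four_block_mat_lower_left_zero[of _ n _ k]) auto
  also have "Nh * transpose_mat Nh = map_mat (\<lambda>a. [:a:]) (N * transpose_mat N)"
    unfolding Nh_def using N by (simp add: map_poly_mult(1) map_mat_transpose)
  finally show ?thesis
    unfolding S_def .
qed

lemma gram_quadratic_form:
  fixes M :: "real mat"
  assumes M: "M \<in> carrier_mat n k" and v: "v \<in> carrier_vec n"
  shows "v \<bullet> ((M * transpose_mat M) *\<^sub>v v) = (transpose_mat M *\<^sub>v v) \<bullet> (transpose_mat M *\<^sub>v v)"
  using transpose_vec_mult_scalar[OF M _ v, of "transpose_mat M *\<^sub>v v"] M v by simp

lemma gram_eigenvalue_nonneg:
  fixes M :: "real mat"
  assumes M: "M \<in> carrier_mat n k" and "eigenvalue (M * transpose_mat M) a"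
  shows "a \<ge> 0"
proof -
  obtain v where v: "v \<in> carrier_vec n" "v \<noteq> 0\<^sub>v n" "(M * transpose_mat M) *\<^sub>v v = a \<cdot>\<^sub>v v"
    using assms unfolding eigenvalue_def eigenvector_def by auto
  have "a * (v \<bullet> v) = (transpose_mat M *\<^sub>v v) \<bullet> (transpose_mat M *\<^sub>v v)"
    using gram_quadratic_form[OF M v(1)] v by simp
  moreover have "(transpose_mat M *\<^sub>v v) \<bullet> (transpose_mat M *\<^sub>v v) \<ge> 0"
    using conjugate_square_ge_0_vec[of "transpose_mat M *\<^sub>v v"] by simp
  moreover have "v \<bullet> v > 0"
    using conjugate_square_greater_0_vec[OF v(1)] v(2) by simp
  ultimately show ?thesis
    by (metis zero_le_mult_iff not_le)
qed

lemma gram_mult_vec_eq_0_iff: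
  fixes M :: "real mat"
  assumes M: "M \<in> carrier_mat n k" and v: "v \<in> carrier_vec n"
  shows "(M * transpose_mat M) *\<^sub>v v = 0\<^sub>v n \<longleftrightarrow> transpose_mat M *\<^sub>v v = 0\<^sub>v k"
proof
  assume "(M * transpose_mat M) *\<^sub>v v = 0\<^sub>v n"
  then have "(transpose_mat M *\<^sub>v v) \<bullet> (transpose_mat M *\<^sub>v v) = 0"
    using gram_quadratic_form[OF M v] v by simp
  then show "transpose_mat M *\<^sub>v v = 0\<^sub>v k"
    using conjugate_square_eq_0_vec[of "transpose_mat M *\<^sub>v v" k] M v by simp
next
  assume "transpose_mat M *\<^sub>v v = 0\<^sub>v k"
  then show "(M * transpose_mat M) *\<^sub>v v = 0\<^sub>v n"
    using M v by (intro eq_vecI) (auto simp: row_def)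
qed

definition repeat_cols :: "nat \<Rightarrow> 'a mat \<Rightarrow> 'a mat" where
  "repeat_cols p B = mat (dim_row B) (p * dim_col B) (\<lambda>(i, c). B $$ (i, c div p))"

lemma repeat_cols_carrier [simp]: "B \<in> carrier_mat n m \<Longrightarrow> repeat_cols p B \<in> carrier_mat n (p * m)"
  by (simp add: repeat_cols_def)

lemma sum_div_blocks:
  fixes f :: "nat \<Rightarrow> 'a :: comm_semiring_1"
  shows "(\<Sum>c<p * m. f (c div p)) = of_nat p * (\<Sum>j<m. f j)"
proof (cases "p = 0")
  case False
  show ?thesis
  proof (induction m)
    case (Suc m)
    have "{..<p * Suc m} = {..<p * m} \<union> {p * m..<p * m + p}"
      by (auto simp: algebra_simps)
    moreover have "(\<Sum>c\<in>{..<p * m} \<union> {p * m..<p * m + p}. f (c div p))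
        = (\<Sum>c<p * m. f (c div p)) + (\<Sum>c\<in>{p * m..<p * m + p}. f (c div p))"
      by (rule sum.union_disjoint) auto
    moreover have "(\<Sum>c\<in>{p * m..<p * m + p}. f (c div p)) = (\<Sum>c\<in>{p * m..<p * m + p}. f m)"
      by (intro sum.cong refl arg_cong[where f = f] div_nat_eqI) (auto simp: algebra_simps)
    ultimately show ?case
      using Suc by (simp add: algebra_simps)
  qed simp
qed simp

lemma repeat_cols_gram:
  fixes B :: "'a :: comm_ring_1 mat"
  shows "repeat_cols p B * transpose_mat (repeat_cols p B) = of_nat p \<cdot>\<^sub>m (B * transpose_mat B)"
proof (rule eq_matI)
  fix i j assume "i < dim_row (of_nat p \<cdot>\<^sub>m (B * transpose_mat B))"
    "j < dim_col (of_nat p \<cdot>\<^sub>m (B * transpose_mat B))"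
  then have ij: "i < dim_row B" "j < dim_row B" by simp_all
  have "(repeat_cols p B * transpose_mat (repeat_cols p B)) $$ (i, j)
      = (\<Sum>c<p * dim_col B. B $$ (i, c div p) * B $$ (j, c div p))"
    using ij by (simp add: repeat_cols_def scalar_prod_def atLeast0LessThan less_mult_imp_div_less mult.commute)
  also have "\<dots> = of_nat p * (\<Sum>l<dim_col B. B $$ (i, l) * B $$ (j, l))"
    by (rule sum_div_blocks)
  finally show "(repeat_cols p B * transpose_mat (repeat_cols p B)) $$ (i, j)
      = (of_nat p \<cdot>\<^sub>m (B * transpose_mat B)) $$ (i, j)"
    using ij by (simp add: scalar_prod_def atLeast0LessThan)
qed (simp_all add: repeat_cols_def)

section \<open>Walks in signed graphs\<close>

lemma signed_graph_edgeD:
  assumes "signed_graph n E \<sigma>" and "j < length E"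
  shows "fst (E ! j) < n" "snd (E ! j) < n" "fst (E ! j) \<noteq> snd (E ! j)" "\<sigma> j = 1 \<or> \<sigma> j = -1"
  using assms unfolding signed_graph_def by auto

lemma signed_graph_ends_inj:
  assumes "signed_graph n E \<sigma>" and "i < length E" "j < length E" and "ends E i = ends E j"
  shows "i = j"
proof -
  have "inj_on (ends E) {0..<length E}"
    using assms(1) by (simp add: signed_graph_def distinct_map)
  then show ?thesis
    using assms by (auto dest: inj_onD)
qed

lemma ends_eq_doubleton_iff:
  "ends E j = {u, v} \<longleftrightarrow> (u = fst (E ! j) \<and> v = snd (E ! j)) \<or> (u = snd (E ! j) \<and> v = fst (E ! j))"
  unfolding ends_def by (auto simp: doubleton_eq_iff)

definition walk :: "(nat \<times> nat) list \<Rightarrow> nat list \<Rightarrow> nat list \<Rightarrow> bool" where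
  "walk E vs es \<longleftrightarrow> length vs = Suc (length es) \<and>
     (\<forall>i < length es. es ! i < length E \<and> ends E (es ! i) = {vs ! i, vs ! Suc i})"

lemma walk_length: "walk E vs es \<Longrightarrow> length vs = Suc (length es)"
  by (simp add: walk_def)

lemma walk_hd_last:
  assumes "walk E vs es"
  shows "hd vs = vs ! 0" "last vs = vs ! length es"
proof -
  have "vs \<noteq> []" "length vs = Suc (length es)"
    using assms by (auto simp: walk_def)
  then show "hd vs = vs ! 0" "last vs = vs ! length es"
    by (simp_all add: hd_conv_nth last_conv_nth)
qed

lemma walk_edge_less: "walk E vs es \<Longrightarrow> j \<in> set es \<Longrightarrow> j < length E"
  by (auto simp: walk_def in_set_conv_nth)

lemma walk_singleton: "walk E [u] []"
  by (simp add: walk_def)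

lemma walk_snoc:
  assumes "walk E vs es" and "j < length E" and "ends E j = {last vs, w}"
  shows "walk E (vs @ [w]) (es @ [j])"
  using assms walk_hd_last[OF assms(1)] unfolding walk_def by (auto simp: nth_append less_Suc_eq)

lemma walk_take: "walk E vs es \<Longrightarrow> k \<le> length es \<Longrightarrow> walk E (take (Suc k) vs) (take k es)"
  by (simp add: walk_def)

lemma walk_drop: "walk E vs es \<Longrightarrow> k \<le> length es \<Longrightarrow> walk E (drop k vs) (drop k es)"
  by (auto simp: walk_def add.commute)

lemma walk_rev:
  assumes w: "walk E vs es"
  shows "walk E (rev vs) (rev es)"
  unfolding walk_def
proof (intro conjI allI impI)
  show "length (rev vs) = Suc (length (rev es))"
    using walk_length[OF w] by simp
next
  fix i assume i: "i < length (rev es)"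
  let ?i' = "length es - Suc i"
  have "es ! ?i' < length E \<and> ends E (es ! ?i') = {vs ! ?i', vs ! Suc ?i'}"
    using w i unfolding walk_def by auto
  moreover have "rev es ! i = es ! ?i'" "rev vs ! i = vs ! Suc ?i'" "rev vs ! Suc i = vs ! ?i'"
    using i walk_length[OF w] by (simp_all add: rev_nth Suc_diff_Suc)
  ultimately show "rev es ! i < length E" "ends E (rev es ! i) = {rev vs ! i, rev vs ! Suc i}"
    by auto
qed

lemma last_append_tl: "ys \<noteq> [] \<Longrightarrow> last xs = hd ys \<Longrightarrow> xs \<noteq> [] \<Longrightarrow> last (xs @ tl ys) = last ys"
  by (cases ys) auto

lemma walk_append:
  assumes w1: "walk E vs1 es1" and w2: "walk E vs2 es2" and join: "last vs1 = hd vs2"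
  shows "walk E (vs1 @ tl vs2) (es1 @ es2)"
proof -
  have l1: "length vs1 = Suc (length es1)" and l2: "length vs2 = Suc (length es2)"
    using w1 w2 by (simp_all add: walk_length)
  have vertex: "(vs1 @ tl vs2) ! (length es1 + t) = vs2 ! t" if "t \<le> length es2" for t
  proof (cases t)
    case 0
    then show ?thesis
      using l1 join walk_hd_last[OF w1] walk_hd_last[OF w2] by (simp add: nth_append)
  next
    case (Suc t')
    then show ?thesis
      using l1 l2 that by (simp add: nth_append nth_tl)
  qed
  have "(es1 @ es2) ! i < length E \<and>
      ends E ((es1 @ es2) ! i) = {(vs1 @ tl vs2) ! i, (vs1 @ tl vs2) ! Suc i}"
    if i: "i < length (es1 @ es2)" for i
  proof (cases "i < length es1")
    case True
    then show ?thesis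
      using w1 l1 by (simp add: walk_def nth_append)
  next
    case False
    then obtain t where t: "i = length es1 + t" "t < length es2"
      using i by (metis add_diff_inverse_nat add_less_cancel_left length_append)
    then show ?thesis
      using w2 vertex[of t] vertex[of "Suc t"] by (simp add: walk_def nth_append)
  qed
  then show ?thesis
    using l1 l2 by (simp add: walk_def)
qed

lemma rtranclp_adj_imp_walk:
  assumes "(adj E)\<^sup>*\<^sup>* u v"
  obtains vs es where "walk E vs es" "hd vs = u" "last vs = v"
  using assms
proof (induction arbitrary: thesis rule: rtranclp_induct)
  case base
  then show ?case
    using walk_singleton by fastforce
next
  case (step w v)
  obtain vs es where "walk E vs es" "hd vs = u" "last vs = w"
    using step.IH by blast
  moreover obtain j where "j < length E" "ends E j = {w, v}"
    using step.hyps(2) by (auto simp: adj_def)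
  moreover have "vs \<noteq> []"
    using \<open>walk E vs es\<close> by (auto simp: walk_def)
  ultimately have "walk E (vs @ [v]) (es @ [j])" "hd (vs @ [v]) = u" "last (vs @ [v]) = v"
    by (auto intro: walk_snoc)
  then show ?case
    by (rule step.prems)
qed

definition walk_between :: "(nat \<times> nat) list \<Rightarrow> nat \<Rightarrow> nat \<Rightarrow> nat list \<Rightarrow> bool" where
  "walk_between E u v es \<longleftrightarrow> (\<exists>vs. walk E vs es \<and> hd vs = u \<and> last vs = v)"

lemma walk_between_Nil: "walk_between E u u []"
  unfolding walk_between_def using walk_singleton by fastforce

lemma walk_between_snoc:
  assumes "walk_between E u v es" and "j < length E" and "ends E j = {v, w}"
  shows "walk_between E u w (es @ [j])"
proof -
  obtain vs where vs: "walk E vs es" "hd vs = u" "last vs = v"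
    using assms(1) by (auto simp: walk_between_def)
  then have "vs \<noteq> []"
    using walk_length[OF vs(1)] by auto
  then show ?thesis
    using walk_snoc[OF vs(1) assms(2)] vs assms(3) unfolding walk_between_def by fastforce
qed

lemma connected_walk_between:
  assumes "connected_graph n E" and "u < n" and "v < n"
  obtains es where "walk_between E u v es"
  using assms rtranclp_adj_imp_walk unfolding connected_graph_def walk_between_def by metis

definition walk_dist :: "(nat \<times> nat) list \<Rightarrow> nat \<Rightarrow> nat \<Rightarrow> nat" where
  "walk_dist E u v = (LEAST l. \<exists>es. walk_between E u v es \<and> length es = l)"

lemma walk_dist_le: "walk_between E u v es \<Longrightarrow> walk_dist E u v \<le> length es"
  unfolding walk_dist_def by (rule Least_le) blast

lemma walk_dist_attained:
  assumes "walk_between E u v es"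
  obtains es' where "walk_between E u v es'" "length es' = walk_dist E u v"
proof -
  have "\<exists>es'. walk_between E u v es' \<and> length es' = walk_dist E u v"
    unfolding walk_dist_def by (rule LeastI_ex) (use assms in blast)
  then show thesis
    using that by blast
qed

lemma walk_dist_parent:
  assumes "walk_between E u v es" and "v \<noteq> u"
  obtains j w where "j < length E" "ends E j = {w, v}" "Suc (walk_dist E u w) = walk_dist E u v"
proof -
  obtain es' where es': "walk_between E u v es'" "length es' = walk_dist E u v"
    using walk_dist_attained[OF assms(1)] .
  then obtain vs where w: "walk E vs es'" "hd vs = u" "last vs = v"
    unfolding walk_between_def by blast
  have "es' \<noteq> []"
    using w assms(2) walk_hd_last[OF w(1)] by auto
  then obtain k where k: "length es' = Suc k"
    by (cases es') auto
  define j where "j = es' ! k"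
  define p where "p = vs ! k"
  have j: "j < length E" "ends E j = {p, v}"
    using w k walk_hd_last[OF w(1)] unfolding walk_def j_def p_def by auto
  have "walk_between E u p (take k es')"
    unfolding walk_between_def using walk_take[OF w(1), of k] walk_hd_last[OF walk_take[OF w(1), of k]] w k
    by (intro exI[of _ "take (Suc k) vs"]) (simp add: p_def walk_hd_last[OF w(1)])
  then have le: "walk_dist E u p \<le> k"
    using walk_dist_le k by fastforce
  obtain es_p where "walk_between E u p es_p" "length es_p = walk_dist E u p"
    using walk_dist_attained[OF \<open>walk_between E u p (take k es')\<close>] .
  then have "walk_dist E u v \<le> Suc (walk_dist E u p)"
    using walk_dist_le[OF walk_between_snoc[OF _ j]] by fastforce
  then have "Suc (walk_dist E u p) = walk_dist E u v"
    using le k es'(2) by simp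
  then show thesis
    using that j by blast
qed

lemma connected_graph_card_le:
  assumes conn: "connected_graph n E"
  shows "n \<le> Suc (length E)"
proof -
  let ?d = "walk_dist E 0"
  have "\<exists>j. j < length E \<and> (\<exists>w. ends E j = {w, v} \<and> Suc (?d w) = ?d v)" if "v \<in> {1..<n}" for v
  proof -
    have "0 < n" "v < n"
      using that by auto
    then obtain es where "walk_between E 0 v es"
      using connected_walk_between[OF conn] by metis
    then show ?thesis
      using walk_dist_parent[of E 0 v es] that by (metis atLeastLessThan_iff not_one_le_zero)
  qed
  \<comment> \<open>every vertex but 0 is assigned the last edge of a shortest walk from 0 to it\<close>
  then obtain f where f: "\<And>v. v \<in> {1..<n} \<Longrightarrow> f v < length E \<and> (\<exists>w. ends E (f v) = {w, v} \<and> Suc (?d w) = ?d v)"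
    by metis
  have "inj_on f {1..<n}"
  proof (rule inj_onI)
    fix v v' assume v: "v \<in> {1..<n}" and v': "v' \<in> {1..<n}" and eq: "f v = f v'"
    obtain w where w: "ends E (f v) = {w, v}" "Suc (?d w) = ?d v"
      using f[OF v] by blast
    obtain w' where w': "ends E (f v') = {w', v'}" "Suc (?d w') = ?d v'"
      using f[OF v'] by blast
    show "v = v'"
    proof (rule ccontr)
      assume "v \<noteq> v'"
      then have "w = v'" "v = w'"
        using w(1) w'(1) eq by (auto simp: doubleton_eq_iff)
      then show False
        using w(2) w'(2) by simp
    qed
  qed
  moreover have "f ` {1..<n} \<subseteq> {..<length E}"
    using f by auto
  ultimately have "card {1..<n} \<le> card {..<length E}"
    by (intro card_inj_on_le) simp_all
  then show ?thesis
    by simp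
qed

section \<open>Balance\<close>

lemma prod_signs_eq_1_iff_even:
  assumes "\<forall>j \<in> set es. \<sigma> j = 1 \<or> \<sigma> j = -1"
  shows "prod_list (map \<sigma> es) = (1 :: int) \<longleftrightarrow> even (length (filter (\<lambda>j. \<sigma> j = -1) es))"
proof -
  have "prod_list (map \<sigma> es) = (-1) ^ length (filter (\<lambda>j. \<sigma> j = -1) es)"
    using assms by (induction es) auto
  then show ?thesis
    by (cases "even (length (filter (\<lambda>j. \<sigma> j = -1) es))") simp_all
qed

lemma walk_sign_cases:
  assumes "signed_graph n E \<sigma>" and "walk E vs es"
  shows "prod_list (map \<sigma> es) = 1 \<or> prod_list (map \<sigma> es) = -1"
proof -
  have "\<forall>j \<in> set es. \<sigma> j = 1 \<or> \<sigma> j = -1"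
    using signed_graph_edgeD(4)[OF assms(1)] walk_edge_less[OF assms(2)] by blast
  then show ?thesis
    by (induction es) auto
qed

lemma closed_walk_split:
  assumes w: "walk E vs es" and closed: "hd vs = last vs"
    and ij: "i < j" "j < length es" and repeat: "vs ! i = vs ! j"
  obtains vs1 es1 vs2 es2 where
    "walk E vs1 es1" "hd vs1 = last vs1" "length es1 < length es"
    "walk E vs2 es2" "hd vs2 = last vs2" "length es2 < length es"
    "mset es = mset es1 + mset es2"
proof
  have len: "length vs = Suc (length es)"
    using walk_length[OF w] .
  show w1: "walk E (take (Suc (j - i)) (drop i vs)) (take (j - i) (drop i es))"
    using walk_take[OF walk_drop[OF w], of i "j - i"] ij by simp
  show "hd (take (Suc (j - i)) (drop i vs)) = last (take (Suc (j - i)) (drop i vs))"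
    using walk_hd_last[OF w1] ij len repeat by simp
  show "length (take (j - i) (drop i es)) < length es"
    using ij by simp
  have join: "last (take (Suc i) vs) = hd (drop j vs)"
    using walk_hd_last[OF walk_take[OF w, of i]] walk_hd_last[OF walk_drop[OF w, of j]] ij len repeat
    by simp
  show w2: "walk E (take (Suc i) vs @ tl (drop j vs)) (take i es @ drop j es)"
    using walk_append[OF walk_take[OF w] walk_drop[OF w] join] ij by simp
  have "tl (drop j vs) \<noteq> []"
    using ij len by (simp add: drop_Suc[symmetric] tl_drop)
  then have "last (take (Suc i) vs @ tl (drop j vs)) = last vs"
    using ij len by (simp add: last_tl)
  moreover have "hd (take (Suc i) vs @ tl (drop j vs)) = hd vs"
    using len by (cases vs) simp_all
  ultimately show "hd (take (Suc i) vs @ tl (drop j vs)) = last (take (Suc i) vs @ tl (drop j vs))"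
    using closed by simp
  show "length (take i es @ drop j es) < length es"
    using ij by simp
  have "es = take i es @ take (j - i) (drop i es) @ drop j es"
    using ij by (metis append_take_drop_id drop_drop le_add_diff_inverse2 less_imp_le_nat)
  then show "mset es = mset (take (j - i) (drop i es)) + mset (take i es @ drop j es)"
    by (metis mset_append add.left_commute add.commute)
qed

lemma short_closed_walk_sign:
  assumes sg: "signed_graph n E \<sigma>" and w: "walk E vs es" and closed: "hd vs = last vs"
    and short: "length es \<le> 2"
  shows "prod_list (map \<sigma> es) = 1"
proof -
  have edge: "es ! i < length E \<and> ends E (es ! i) = {vs ! i, vs ! Suc i}" if "i < length es" for i
    using w that unfolding walk_def by auto
  have closed': "vs ! 0 = vs ! length es"
    using closed walk_hd_last[OF w] by simp
  have no_loop: "ends E j \<noteq> {u}" if "j < length E" for j u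
    using signed_graph_edgeD(3)[OF sg that] unfolding ends_def by auto
  consider "es = []" | j where "es = [j]" | j k where "es = [j, k]"
    using short by (auto simp: le_Suc_eq numeral_2_eq_2 length_Suc_conv)
  then show ?thesis
  proof cases
    case (2 j)
    then show ?thesis
      using edge[of 0] closed' no_loop by auto
  next
    case (3 j k)
    then have "ends E j = ends E k" "j < length E" "k < length E"
      using edge[of 0] edge[of 1] closed' by (auto simp: insert_commute)
    then have "j = k"
      using signed_graph_ends_inj[OF sg] by blast
    moreover have "\<sigma> j = 1 \<or> \<sigma> j = -1"
      using signed_graph_edgeD(4)[OF sg \<open>j < length E\<close>] .
    ultimately show ?thesis
      using 3 by auto
  qed simp
qed

lemma simple_closed_walk_distinct_edges:
  assumes w: "walk E vs es" and closed: "hd vs = last vs" and long: "length es \<ge> 3"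
    and simple: "\<And>i j. i < j \<Longrightarrow> j < length es \<Longrightarrow> vs ! i \<noteq> vs ! j"
  shows "distinct es"
proof -
  let ?k = "length es"
  have inj: "i = j" if "i < ?k" "j < ?k" "vs ! i = vs ! j" for i j
    using simple[of i j] simple[of j i] that by (cases i j rule: linorder_cases) auto
  have closed': "vs ! 0 = vs ! ?k"
    using closed walk_hd_last[OF w] by simp
  have "0 < ?k"
    using long by linarith
  have "es ! a \<noteq> es ! b" if ab: "a < b" "b < ?k" for a b
  proof
    assume "es ! a = es ! b"
    then have "{vs ! a, vs ! Suc a} = {vs ! b, vs ! Suc b}"
      using w ab unfolding walk_def by (metis less_trans)
    moreover have "vs ! a \<noteq> vs ! b"
      using inj[of a b] ab by auto
    ultimately have cross: "vs ! a = vs ! Suc b" "vs ! Suc a = vs ! b"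
      by (auto simp: doubleton_eq_iff)
    \<comment> \<open>two steps of a simple closed walk can only share their ends if the walk has length 2\<close>
    have "Suc b = ?k"
      using inj[of a "Suc b"] cross(1) ab by (cases "Suc b < ?k") auto
    then have "a = 0"
      using inj[of a 0] cross(1) closed' ab \<open>0 < ?k\<close> by simp
    then have "b = 1"
      using inj[of 1 b] cross(2) ab long by simp
    then show False
      using \<open>Suc b = ?k\<close> long by simp
  qed
  then show ?thesis
    unfolding distinct_conv_nth by (metis linorder_neqE_nat)
qed

lemma simple_closed_walk_is_cycle:
  assumes w: "walk E vs es" and closed: "hd vs = last vs" and long: "length es \<ge> 3"
    and simple: "\<And>i j. i < j \<Longrightarrow> j < length es \<Longrightarrow> vs ! i \<noteq> vs ! j"
  shows "is_cycle E (butlast vs) es"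
proof -
  define k where "k = length es"
  have len: "length (butlast vs) = k"
    using walk_length[OF w] k_def by simp
  have nth_butlast': "butlast vs ! i = vs ! i" if "i < k" for i
    using that walk_length[OF w] k_def by (simp add: nth_butlast)
  have closed': "vs ! 0 = vs ! k"
    using closed walk_hd_last[OF w] k_def by simp
  have edge: "es ! i < length E \<and> ends E (es ! i) = {vs ! i, vs ! Suc i}" if "i < k" for i
    using w that unfolding walk_def k_def by auto
  show ?thesis
    unfolding is_cycle_def
  proof (intro conjI allI impI)
    show "3 \<le> length (butlast vs)" "length es = length (butlast vs)"
      using long len k_def by simp_all
    show "distinct (butlast vs)"
      unfolding distinct_conv_nth len using simple nth_butlast' k_def by (metis linorder_neqE_nat)
    show "distinct es"
      using simple_closed_walk_distinct_edges[OF w closed long simple] .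
  next
    fix i assume i: "i < length (butlast vs)"
    have "butlast vs ! ((i + 1) mod length (butlast vs)) = vs ! Suc i"
    proof (cases "Suc i < k")
      case True
      then show ?thesis
        using len nth_butlast' by simp
    next
      case False
      then have "Suc i = k"
        using i len by simp
      moreover have "0 < k"
        using long k_def by linarith
      ultimately show ?thesis
        using len closed' nth_butlast'[of 0] by simp
    qed
    then show "es ! i < length E"
      "ends E (es ! i) = {butlast vs ! i, butlast vs ! ((i + 1) mod length (butlast vs))}"
      using edge[of i] i len nth_butlast' by auto
  qed
qed

lemma balanced_closed_walk_sign:
  assumes sg: "signed_graph n E \<sigma>" and bal: "balanced E \<sigma>"
  shows "walk E vs es \<Longrightarrow> hd vs = last vs \<Longrightarrow> prod_list (map \<sigma> es) = 1"
proof (induction "length es" arbitrary: vs es rule: less_induct)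
  case less
  show ?case
  proof (cases "\<exists>i j. i < j \<and> j < length es \<and> vs ! i = vs ! j")
    case True
    then obtain i j where "i < j" "j < length es" "vs ! i = vs ! j" by blast
    with less.prems obtain vs1 es1 vs2 es2 where
      "walk E vs1 es1" "hd vs1 = last vs1" "length es1 < length es"
      "walk E vs2 es2" "hd vs2 = last vs2" "length es2 < length es"
      and split: "mset es = mset es1 + mset es2"
      by (rule closed_walk_split)
    then have "prod_list (map \<sigma> es1) = 1" "prod_list (map \<sigma> es2) = 1"
      using less.hyps by blast+
    moreover have "prod_list (map \<sigma> es) = prod_list (map \<sigma> es1) * prod_list (map \<sigma> es2)"
      using arg_cong[OF split, of "\<lambda>M. prod_mset (image_mset \<sigma> M)"]
      by (simp flip: prod_mset_prod_list)
    ultimately show ?thesis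
      by simp
  next
    case False
    show ?thesis
    proof (cases "length es \<le> 2")
      case True
      then show ?thesis
        using short_closed_walk_sign[OF sg less.prems] by simp
    next
      case long: False
      have "is_cycle E (butlast vs) es"
        using False long by (intro simple_closed_walk_is_cycle[OF less.prems]) auto
      then have "even (length (filter (\<lambda>j. \<sigma> j = -1) es))"
        using bal unfolding balanced_def by blast
      moreover have "\<forall>j \<in> set es. \<sigma> j = 1 \<or> \<sigma> j = -1"
        using signed_graph_edgeD(4)[OF sg] walk_edge_less[OF less.prems(1)] by blast
      ultimately show ?thesis
        by (simp add: prod_signs_eq_1_iff_even)
    qed
  qed
qed

lemma balanced_walk_between_sign_unique:
  assumes sg: "signed_graph n E \<sigma>" and bal: "balanced E \<sigma>"
    and "walk_between E u v es" and "walk_between E u v es'"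
  shows "prod_list (map \<sigma> es) = prod_list (map \<sigma> es')"
proof -
  obtain vs vs' where w: "walk E vs es" "hd vs = u" "last vs = v"
    and w': "walk E vs' es'" "hd vs' = u" "last vs' = v"
    using assms(3,4) by (auto simp: walk_between_def)
  have ne: "vs \<noteq> []" "vs' \<noteq> []"
    using walk_length[OF w(1)] walk_length[OF w'(1)] by auto
  have round: "walk E (vs @ tl (rev vs')) (es @ rev es')"
    using walk_append[OF w(1) walk_rev[OF w'(1)]] w(3) w'(3) ne by (simp add: hd_rev)
  have "hd (vs @ tl (rev vs')) = last (vs @ tl (rev vs'))"
    using w w' ne by (simp add: last_append_tl hd_rev last_rev)
  then have "prod_list (map \<sigma> es) * prod_list (map \<sigma> es') = 1"
    using balanced_closed_walk_sign[OF sg bal round] by (simp add: rev_map[symmetric] prod_list.rev)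
  then show ?thesis
    using walk_sign_cases[OF sg w'(1)] by auto
qed

definition sign_compatible :: "(nat \<times> nat) list \<Rightarrow> (nat \<Rightarrow> int) \<Rightarrow> (nat \<Rightarrow> real) \<Rightarrow> bool" where
  "sign_compatible E \<sigma> x \<longleftrightarrow> (\<forall>j < length E. x (snd (E ! j)) = of_int (\<sigma> j) * x (fst (E ! j)))"

lemma balanced_imp_sign_compatible:
  assumes sg: "signed_graph n E \<sigma>" and conn: "connected_graph n E" and bal: "balanced E \<sigma>"
  obtains x where "sign_compatible E \<sigma> x" and "x 0 = 1"
proof -
  \<comment> \<open>the sign of a walk from 0 to v, which by balance does not depend on the walk\<close>
  define x where "x v = real_of_int (prod_list (map \<sigma> (SOME es. walk_between E 0 v es)))" for v
  have x_eq: "x v = of_int (prod_list (map \<sigma> es))" if "walk_between E 0 v es" for v es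
    using balanced_walk_between_sign_unique[OF sg bal someI[of "walk_between E 0 v", OF that] that]
    unfolding x_def by simp
  have "sign_compatible E \<sigma> x"
    unfolding sign_compatible_def
  proof (intro allI impI)
    fix j assume j: "j < length E"
    have "0 < n" "fst (E ! j) < n"
      using conn signed_graph_edgeD(1)[OF sg j] by (auto simp: connected_graph_def)
    then obtain es where es: "walk_between E 0 (fst (E ! j)) es"
      using connected_walk_between[OF conn] by metis
    then have "walk_between E 0 (snd (E ! j)) (es @ [j])"
      using j by (intro walk_between_snoc) (auto simp: ends_def)
    then show "x (snd (E ! j)) = of_int (\<sigma> j) * x (fst (E ! j))"
      using x_eq[OF es] x_eq by simp
  qed
  moreover have "x 0 = 1"
    using x_eq[OF walk_between_Nil] by simp
  ultimately show thesis
    using that by blast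
qed

lemma sign_compatible_edge:
  assumes sg: "signed_graph n E \<sigma>" and x: "sign_compatible E \<sigma> x"
    and j: "j < length E" and "ends E j = {a, b}"
  shows "x b = of_int (\<sigma> j) * x a"
  using assms(4) x j signed_graph_edgeD(4)[OF sg j] unfolding ends_eq_doubleton_iff sign_compatible_def
  by auto

lemma sign_compatible_walk:
  assumes sg: "signed_graph n E \<sigma>" and x: "sign_compatible E \<sigma> x" and w: "walk E vs es"
  shows "x (last vs) = of_int (prod_list (map \<sigma> es)) * x (hd vs)"
proof -
  have "x (vs ! k) = of_int (prod_list (map \<sigma> (take k es))) * x (vs ! 0)" if "k \<le> length es" for k
    using that
  proof (induction k)
    case (Suc k)
    have "es ! k < length E" "ends E (es ! k) = {vs ! k, vs ! Suc k}"
      using w Suc.prems unfolding walk_def by auto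
    then have "x (vs ! Suc k) = of_int (\<sigma> (es ! k)) * x (vs ! k)"
      by (rule sign_compatible_edge[OF sg x])
    then show ?case
      using Suc by (simp add: take_Suc_conv_app_nth)
  qed simp
  from this[of "length es"] show ?thesis
    using walk_hd_last[OF w] by simp
qed

lemma cycle_imp_closed_walk:
  assumes "is_cycle E vs es"
  shows "walk E (vs @ [vs ! 0]) es"
proof -
  have "(vs @ [vs ! 0]) ! Suc i = vs ! ((i + 1) mod length vs)" if "i < length vs" for i
    using that by (cases "Suc i = length vs") (simp_all add: nth_append)
  then show ?thesis
    using assms unfolding is_cycle_def walk_def by (auto simp: nth_append)
qed

lemma sign_compatible_imp_balanced:
  assumes sg: "signed_graph n E \<sigma>" and conn: "connected_graph n E"
    and x: "sign_compatible E \<sigma> x" and "u < n" and "x u \<noteq> 0"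
  shows "balanced E \<sigma>"
proof -
  have nonzero: "x v \<noteq> 0" if "v < n" for v
  proof -
    obtain vs es where w: "walk E vs es" "hd vs = u" "last vs = v"
      using conn \<open>u < n\<close> \<open>v < n\<close> rtranclp_adj_imp_walk unfolding connected_graph_def by metis
    then have "x v = of_int (prod_list (map \<sigma> es)) * x u"
      using sign_compatible_walk[OF sg x w(1)] by simp
    with walk_sign_cases[OF sg w(1)] \<open>x u \<noteq> 0\<close> show ?thesis
      by (elim disjE) simp_all
  qed
  show ?thesis
    unfolding balanced_def
  proof (intro allI impI)
    fix vs es assume cycle: "is_cycle E vs es"
    have "3 \<le> length vs"
      using cycle unfolding is_cycle_def by simp
    then have "0 < length vs"
      by linarith
    then have "es ! 0 < length E" "vs ! 0 \<in> ends E (es ! 0)"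
      using cycle unfolding is_cycle_def by auto
    then have "x (vs ! 0) \<noteq> 0"
      using nonzero signed_graph_edgeD[OF sg] unfolding ends_def by auto
    moreover have "x (vs ! 0) = of_int (prod_list (map \<sigma> es)) * x (vs ! 0)"
      using sign_compatible_walk[OF sg x cycle_imp_closed_walk[OF cycle]] \<open>0 < length vs\<close>
      by (simp add: hd_conv_nth nth_append)
    ultimately have "prod_list (map \<sigma> es) = 1"
      by simp
    moreover have "\<forall>j \<in> set es. \<sigma> j = 1 \<or> \<sigma> j = -1"
      using signed_graph_edgeD(4)[OF sg] walk_edge_less[OF cycle_imp_closed_walk[OF cycle]] by blast
    ultimately show "even (length (filter (\<lambda>j. \<sigma> j = -1) es))"
      by (simp add: prod_signs_eq_1_iff_even)
  qed
qed

lemma balanced_iff_sign_compatible: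
  assumes sg: "signed_graph n E \<sigma>" and conn: "connected_graph n E"
  shows "balanced E \<sigma> \<longleftrightarrow> (\<exists>x. sign_compatible E \<sigma> x \<and> (\<exists>u < n. x u \<noteq> 0))"
proof
  assume "balanced E \<sigma>"
  then obtain x where "sign_compatible E \<sigma> x" "x 0 = 1"
    using balanced_imp_sign_compatible[OF sg conn] by blast
  moreover have "0 < n"
    using conn by (simp add: connected_graph_def)
  ultimately show "\<exists>x. sign_compatible E \<sigma> x \<and> (\<exists>u < n. x u \<noteq> 0)"
    by (intro exI[of _ x]) auto
qed (use sign_compatible_imp_balanced[OF sg conn] in blast)

section \<open>The signed incidence matrix and the Laplacian\<close>

lemma orientation_sign:
  assumes "orientation E \<sigma> \<theta>" and "j < length E" and "u \<in> ends E j"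
  shows "\<theta> u j = 1 \<or> \<theta> u j = -1"
  using assms unfolding orientation_def ends_def by auto

lemma orientation_mult:
  assumes "orientation E \<sigma> \<theta>" and "j < length E" and "ends E j = {u, v}"
  shows "\<theta> u j * \<theta> v j = - \<sigma> j"
  using assms unfolding orientation_def ends_eq_doubleton_iff by (auto simp: mult.commute)

lemma dim_laplacian [simp]: "dim_row (laplacian n E \<sigma>) = n" "dim_col (laplacian n E \<sigma>) = n"
  by (simp_all add: laplacian_def adjacency_def)

lemma laplacian_carrier [simp]: "laplacian n E \<sigma> \<in> carrier_mat n n"
  by (rule carrier_matI) simp_all

definition incidence_mat :: "nat \<Rightarrow> (nat \<times> nat) list \<Rightarrow> (nat \<Rightarrow> nat \<Rightarrow> int) \<Rightarrow> real mat" where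
  "incidence_mat n E \<theta> = mat n (length E) (\<lambda>(u, j). if u \<in> ends E j then of_int (\<theta> u j) else 0)"

lemma dim_incidence_mat:
  "dim_row (incidence_mat n E \<theta>) = n" "dim_col (incidence_mat n E \<theta>) = length E"
  by (simp_all add: incidence_mat_def)

lemma incidence_mat_carrier [simp]: "incidence_mat n E \<theta> \<in> carrier_mat n (length E)"
  by (rule carrier_matI) (simp_all add: dim_incidence_mat)

lemma Sp_adjacency_eq_four_block:
  "Sp_adjacency n p E \<theta> = four_block_mat (0\<^sub>m n n) (repeat_cols p (incidence_mat n E \<theta>))
     (transpose_mat (repeat_cols p (incidence_mat n E \<theta>))) (0\<^sub>m (p * length E) (p * length E))"
  by (rule eq_matI)
    (auto simp: Sp_adjacency_def Sp_entry_def repeat_cols_def incidence_mat_def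
      less_mult_imp_div_less mult.commute)

lemma incidence_mat_entry_square:
  assumes "orientation E \<sigma> \<theta>" and "u < n" and "j < length E"
  shows "incidence_mat n E \<theta> $$ (u, j) * incidence_mat n E \<theta> $$ (u, j) = (if u \<in> ends E j then 1 else 0)"
  by (cases "u \<in> ends E j") (use assms orientation_sign[OF assms(1,3), of u] in \<open>auto simp: incidence_mat_def\<close>)

lemma incidence_mat_entry_mult:
  assumes or: "orientation E \<sigma> \<theta>" and "u < n" "v < n" "u \<noteq> v" and j: "j < length E"
  shows "incidence_mat n E \<theta> $$ (u, j) * incidence_mat n E \<theta> $$ (v, j)
       = (if ends E j = {u, v} then - of_int (\<sigma> j) else 0)"
proof (cases "ends E j = {u, v}")
  case True
  then have "real_of_int (\<theta> u j) * real_of_int (\<theta> v j) = - real_of_int (\<sigma> j)"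
    using orientation_mult[OF or j True] by (metis of_int_minus of_int_mult)
  then show ?thesis
    using True assms by (simp add: incidence_mat_def)
next
  case False
  then have "u \<notin> ends E j \<or> v \<notin> ends E j"
    using \<open>u \<noteq> v\<close> unfolding ends_def by auto
  then show ?thesis
    using False assms by (auto simp: incidence_mat_def)
qed

lemma incidence_mat_gram:
  assumes sg: "signed_graph n E \<sigma>" and or: "orientation E \<sigma> \<theta>"
  shows "incidence_mat n E \<theta> * transpose_mat (incidence_mat n E \<theta>) = laplacian n E \<sigma>"
proof (rule eq_matI)
  let ?B = "incidence_mat n E \<theta>"
  fix u v assume "u < dim_row (laplacian n E \<sigma>)" "v < dim_col (laplacian n E \<sigma>)"
  then have uv: "u < n" "v < n" by simp_all
  have entry: "(?B * transpose_mat ?B) $$ (u, v) = (\<Sum>j<length E. ?B $$ (u, j) * ?B $$ (v, j))"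
    using uv by (simp add: scalar_prod_def atLeast0LessThan dim_incidence_mat)
  show "(?B * transpose_mat ?B) $$ (u, v) = laplacian n E \<sigma> $$ (u, v)"
  proof (cases "u = v")
    case True
    have "(\<Sum>j<length E. ?B $$ (u, j) * ?B $$ (u, j)) = (\<Sum>j | j < length E \<and> u \<in> ends E j. 1)"
      by (rule sum.mono_neutral_cong_right) (auto simp: incidence_mat_entry_square[OF or uv(1)])
    then show ?thesis
      using True uv entry by (simp add: laplacian_def adjacency_def degree_def)
  next
    case False
    note products = incidence_mat_entry_mult[OF or uv False]
    show ?thesis
    proof (cases "\<exists>j < length E. ends E j = {u, v}")
      case True
      then obtain j0 where j0: "j0 < length E" "ends E j0 = {u, v}" by blast
      have unique: "j = j0" if "j < length E" "ends E j = {u, v}" for j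
        using signed_graph_ends_inj[OF sg that(1) j0(1)] that j0 by simp
      have "(THE j. j < length E \<and> ends E j = {u, v}) = j0"
        using j0 unique by (intro the_equality) blast+
      moreover have "(\<Sum>j<length E. ?B $$ (u, j) * ?B $$ (v, j))
          = (\<Sum>j<length E. if j = j0 then - real_of_int (\<sigma> j0) else 0)"
        using j0 by (intro sum.cong) (auto simp: products dest: unique)
      ultimately show ?thesis
        using False uv entry j0 by (auto simp: laplacian_def adjacency_def)
    next
      case False
      then show ?thesis
        using \<open>u \<noteq> v\<close> uv entry by (auto simp: products laplacian_def adjacency_def)
    qed
  qed
qed (simp_all add: incidence_mat_def)

lemma incidence_mat_transpose_mult_vec:
  assumes sg: "signed_graph n E \<sigma>" and v: "v \<in> carrier_vec n" and j: "j < length E"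
  shows "(transpose_mat (incidence_mat n E \<theta>) *\<^sub>v v) $ j =
     of_int (\<theta> (fst (E ! j)) j) * v $ fst (E ! j) + of_int (\<theta> (snd (E ! j)) j) * v $ snd (E ! j)"
proof -
  let ?a = "fst (E ! j)" and ?b = "snd (E ! j)"
  have ab: "?a < n" "?b < n" "?a \<noteq> ?b"
    using signed_graph_edgeD[OF sg j] by simp_all
  have "(transpose_mat (incidence_mat n E \<theta>) *\<^sub>v v) $ j
      = (\<Sum>u\<in>{0..<n}. if u \<in> {?a, ?b} then of_int (\<theta> u j) * v $ u else 0)"
    using v j by (auto simp: incidence_mat_def scalar_prod_def ends_def intro!: sum.cong)
  also have "\<dots> = (\<Sum>u\<in>{0..<n} \<inter> {?a, ?b}. of_int (\<theta> u j) * v $ u)"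
    by (rule sum.inter_restrict[symmetric]) simp
  also have "{0..<n} \<inter> {?a, ?b} = {?a, ?b}"
    using ab by auto
  finally show ?thesis
    using ab by simp
qed

lemma incidence_mat_transpose_kernel_iff:
  assumes sg: "signed_graph n E \<sigma>" and or: "orientation E \<sigma> \<theta>" and v: "v \<in> carrier_vec n"
  shows "transpose_mat (incidence_mat n E \<theta>) *\<^sub>v v = 0\<^sub>v (length E) \<longleftrightarrow> sign_compatible E \<sigma> (($) v)"
proof -
  have edge: "of_int (\<theta> (fst (E ! j)) j) * v $ fst (E ! j) + of_int (\<theta> (snd (E ! j)) j) * v $ snd (E ! j) = 0
      \<longleftrightarrow> v $ snd (E ! j) = of_int (\<sigma> j) * v $ fst (E ! j)" if j: "j < length E" for j
  proof -
    have "\<theta> (fst (E ! j)) j * \<theta> (snd (E ! j)) j = - \<sigma> j"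
      "\<theta> (fst (E ! j)) j = 1 \<or> \<theta> (fst (E ! j)) j = -1" "\<theta> (snd (E ! j)) j = 1 \<or> \<theta> (snd (E ! j)) j = -1"
      using or j unfolding orientation_def by auto
    then show ?thesis
      by (elim disjE) (auto simp: algebra_simps)
  qed
  have "transpose_mat (incidence_mat n E \<theta>) *\<^sub>v v = 0\<^sub>v (length E) \<longleftrightarrow>
      (\<forall>j < length E. (transpose_mat (incidence_mat n E \<theta>) *\<^sub>v v) $ j = 0)"
    by (auto simp: vec_eq_iff incidence_mat_def)
  then show ?thesis
    by (simp add: incidence_mat_transpose_mult_vec[OF sg v] edge sign_compatible_def)
qed

lemma laplacian_eigenvalue_nonneg:
  assumes "signed_graph n E \<sigma>" and "orientation E \<sigma> \<theta>" and "eigenvalue (laplacian n E \<sigma>) a"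
  shows "a \<ge> 0"
  using gram_eigenvalue_nonneg[OF incidence_mat_carrier] incidence_mat_gram[OF assms(1,2)] assms(3)
  by metis

lemma laplacian_zero_eigenvalue_iff:
  assumes sg: "signed_graph n E \<sigma>" and or: "orientation E \<sigma> \<theta>"
  shows "eigenvalue (laplacian n E \<sigma>) 0 \<longleftrightarrow> (\<exists>x. sign_compatible E \<sigma> x \<and> (\<exists>u < n. x u \<noteq> 0))"
proof -
  have kernel: "laplacian n E \<sigma> *\<^sub>v v = 0 \<cdot>\<^sub>v v \<longleftrightarrow> sign_compatible E \<sigma> (($) v)"
    if v: "v \<in> carrier_vec n" for v
  proof -
    have "0 \<cdot>\<^sub>v v = 0\<^sub>v n"
      using v by auto
    then show ?thesis
      using gram_mult_vec_eq_0_iff[OF incidence_mat_carrier[of n E \<theta>] v]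
      by (simp add: incidence_mat_gram[OF sg or] incidence_mat_transpose_kernel_iff[OF sg or v])
  qed
  show ?thesis
  proof
    assume "eigenvalue (laplacian n E \<sigma>) 0"
    then obtain v where v: "v \<in> carrier_vec n" "v \<noteq> 0\<^sub>v n" "laplacian n E \<sigma> *\<^sub>v v = 0 \<cdot>\<^sub>v v"
      unfolding eigenvalue_def eigenvector_def by auto
    moreover obtain u where "u < n" "v $ u \<noteq> 0"
      using v(1,2) by (metis eq_vecI carrier_vecD index_zero_vec)
    ultimately show "\<exists>x. sign_compatible E \<sigma> x \<and> (\<exists>u < n. x u \<noteq> 0)"
      using kernel by blast
  next
    assume "\<exists>x. sign_compatible E \<sigma> x \<and> (\<exists>u < n. x u \<noteq> 0)"
    then obtain x u where x: "sign_compatible E \<sigma> x" "u < n" "x u \<noteq> 0" by blast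
    have "sign_compatible E \<sigma> (($) (vec n x))"
      using x(1) signed_graph_edgeD[OF sg] by (simp add: sign_compatible_def)
    moreover have "vec n x \<noteq> 0\<^sub>v n"
      using x(2,3) by (metis index_vec index_zero_vec(1))
    ultimately show "eigenvalue (laplacian n E \<sigma>) 0"
      using kernel[of "vec n x"] unfolding eigenvalue_def eigenvector_def
      by (intro exI[of _ "vec n x"]) simp
  qed
qed

lemma zero_in_laplacian_spectrum_iff_balanced:
  assumes sg: "signed_graph n E \<sigma>" and conn: "connected_graph n E" and or: "orientation E \<sigma> \<theta>"
    and spectrum: "has_spectrum (laplacian n E \<sigma>) \<mu>"
  shows "0 \<in># \<mu> \<longleftrightarrow> balanced E \<sigma>"
proof -
  have "0 \<in># \<mu> \<longleftrightarrow> eigenvalue (laplacian n E \<sigma>) 0"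
    using spectrum
    by (simp add: eigenvalue_root_char_poly[OF laplacian_carrier] has_spectrum_iff_linear_factors
        poly_linear_factors_eq_0_iff)
  then show ?thesis
    by (simp add: laplacian_zero_eigenvalue_iff[OF sg or] balanced_iff_sign_compatible[OF sg conn])
qed

lemma char_poly_Sp_adjacency:
  assumes sg: "signed_graph n E \<sigma>" and or: "orientation E \<sigma> \<theta>" and "p > 0"
    and spectrum: "has_spectrum (laplacian n E \<sigma>) \<mu>"
  shows "char_poly (Sp_adjacency n p E \<theta>) * [:0, 1:] ^ n
       = linear_factors (pm_sqrt p \<mu>) * [:0, 1:] ^ (p * length E)"
proof -
  let ?N = "repeat_cols p (incidence_mat n E \<theta>)"
  have gram: "?N * transpose_mat ?N = real p \<cdot>\<^sub>m laplacian n E \<sigma>"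
    by (simp add: repeat_cols_gram incidence_mat_gram[OF sg or])
  have char: "char_poly (laplacian n E \<sigma>) = linear_factors \<mu>"
    using spectrum by (simp add: has_spectrum_iff_linear_factors)
  have "\<forall>a\<in>#\<mu>. a \<ge> 0"
    using laplacian_eigenvalue_nonneg[OF sg or] char
    by (simp add: eigenvalue_root_char_poly[OF laplacian_carrier] poly_linear_factors_eq_0_iff)
  then have "det ([:0, 0, 1:] \<cdot>\<^sub>m 1\<^sub>m n - map_mat (\<lambda>a. [:a:]) (?N * transpose_mat ?N))
      = linear_factors (pm_sqrt p \<mu>)"
    unfolding gram using \<open>p > 0\<close>
    by (simp add: det_square_char_matrix_smult[OF laplacian_carrier char] linear_factors_pm_sqrt)
  then show ?thesis
    using char_poly_bipartite[of ?N n "p * length E"]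
    by (simp add: Sp_adjacency_eq_four_block)
qed

theorem theorem4p2:
  fixes n p :: nat and E :: "(nat \<times> nat) list" and \<sigma> :: "nat \<Rightarrow> int"
    and \<theta> :: "nat \<Rightarrow> nat \<Rightarrow> int" and \<mu> :: "real multiset"
  assumes "signed_graph n E \<sigma>" and "connected_graph n E"
    and "orientation E \<sigma> \<theta>" and "p \<ge> 1"
    and "has_spectrum (laplacian n E \<sigma>) \<mu>"
  shows "(balanced E \<sigma> \<longrightarrow> 0 \<in># \<mu> \<and>
           has_spectrum (Sp_adjacency n p E \<theta>)
             (replicate_mset (p * length E + 2 - n) 0 + pm_sqrt p (\<mu> - {#0#})))
       \<and> (\<not> balanced E \<sigma> \<longrightarrow>
           has_spectrum (Sp_adjacency n p E \<theta>)
             (replicate_mset (p * length E - n) 0 + pm_sqrt p \<mu>))"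
proof -
  let ?S = "Sp_adjacency n p E \<theta>" and ?X = "[:0, 1:] :: real poly" and ?K = "p * length E"
  have char_S: "char_poly ?S * ?X ^ n = linear_factors (pm_sqrt p \<mu>) * ?X ^ ?K"
    using char_poly_Sp_adjacency[OF assms(1,3) _ assms(5)] assms(4) by simp
  have zero_iff: "0 \<in># \<mu> \<longleftrightarrow> balanced E \<sigma>"
    using zero_in_laplacian_spectrum_iff_balanced[OF assms(1,2,3,5)] .
  show ?thesis
  proof (intro conjI impI)
    assume "balanced E \<sigma>"
    then show "0 \<in># \<mu>"
      using zero_iff by simp
    then have "pm_sqrt p \<mu> = replicate_mset 2 0 + pm_sqrt p (\<mu> - {#0#})"
      by (metis insert_DiffM pm_sqrt_add_zero)
    then have "char_poly ?S * ?X ^ n = linear_factors (pm_sqrt p (\<mu> - {#0#})) * ?X ^ (?K + 2)"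
      using char_S by (simp only: linear_factors_replicate_zero power_add mult_ac)
    moreover have "n \<le> ?K + 2"
      using connected_graph_card_le[OF assms(2)] mult_le_mono1[OF assms(4), of "length E"] by linarith
    ultimately show "has_spectrum ?S (replicate_mset (?K + 2 - n) 0 + pm_sqrt p (\<mu> - {#0#}))"
      by (rule has_spectrum_replicate_zero)
  next
    assume "\<not> balanced E \<sigma>"
    then have "poly (linear_factors (pm_sqrt p \<mu>)) 0 \<noteq> 0"
      using zero_iff assms(4) by (simp add: poly_linear_factors_eq_0_iff zero_in_pm_sqrt_iff)
    then have "n \<le> ?K"
      by (rule mult_power_X_exponent_le[OF char_S])
    then show "has_spectrum ?S (replicate_mset (?K - n) 0 + pm_sqrt p \<mu>)"
      by (rule has_spectrum_replicate_zero[OF char_S])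
  qed
qed

end
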